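(* Let $t=0$, $n\ge3$ and $1<\ell<n$. Consider the mTAZRP of type $\lambda$ on $n$ sites with parameters $x_1,\dots,x_n>0$, started at time $0$ from any configuration in which sites $\ell+1,\dots,n$ are empty. Then the law of the path $(W_s|_{[\ell]})_{s>0}$, where $W_s|_{[\ell]}=(W_s(1),\dots,W_s(\ell))$ is the configuration restricted to sites $1,\dots,\ell$, is unchanged when the parameters $x_{\ell+1},\dots,x_n$ are permuted (keeping $x_1,\dots,x_\ell$ fixed).
   Context: mTAZRP at $t=0$: for a partition $\lambda$, sites $1,\dots,n$ on a ring (site $n+1$ is site $1$); a configuration assigns to each site a multiset of species so that the union is the multiset of parts of $\lambda$ (larger label = stronger). With $t=0$, each nonempty site $j$, independently, at rate $x_j^{-1}$ sends one particle of the largest species present at $j$ to site $j+1$; empty sites do nothing. *)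

theory Defs
  imports Complex_Main "HOL-Library.Multiset" "HOL-Combinatorics.Permutations"
begin

text \<open>mTAZRP at t = 0 on a ring of n sites 1..n. A configuration is a map
 eta :: nat => nat multiset (site |-> multiset of species), empty off {1..n},
 whose union over the sites is the multiset lam of parts of the partition.\<close>

definition nxt :: "nat \<Rightarrow> nat \<Rightarrow> nat" where
  "nxt n j = (if j = n then 1 else j + 1)"

definition Conf :: "nat \<Rightarrow> nat multiset \<Rightarrow> (nat \<Rightarrow> nat multiset) set" where
  "Conf n lam = {eta. (\<forall>j. j \<notin> {1..n} \<longrightarrow> eta j = {#}) \<and> (\<Sum>j\<in>{1..n}. eta j) = lam}"

definition step :: "nat \<Rightarrow> (nat \<Rightarrow> nat multiset) \<Rightarrow> nat \<Rightarrow> (nat \<Rightarrow> nat multiset)" where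
  "step n eta j = (let m = Max_mset (eta j); eta1 = eta(j := eta j - {#m#})
                   in eta1(nxt n j := eta1 (nxt n j) + {#m#}))"

definition rate :: "nat \<Rightarrow> (nat \<Rightarrow> real) \<Rightarrow> (nat \<Rightarrow> nat multiset) \<Rightarrow> (nat \<Rightarrow> nat multiset) \<Rightarrow> real" where
  "rate n x eta eta' = (\<Sum>j\<in>{1..n}. if eta j \<noteq> {#} \<and> step n eta j = eta' then 1 / x j else 0)"

definition gen :: "nat \<Rightarrow> nat multiset \<Rightarrow> (nat \<Rightarrow> real) \<Rightarrow> (nat \<Rightarrow> nat multiset) \<Rightarrow> (nat \<Rightarrow> nat multiset) \<Rightarrow> real" where
  "gen n lam x a b = (if a = b then - (\<Sum>c\<in>Conf n lam - {a}. rate n x a c) else rate n x a b)"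

fun matpow :: "'s set \<Rightarrow> ('s \<Rightarrow> 's \<Rightarrow> real) \<Rightarrow> nat \<Rightarrow> 's \<Rightarrow> 's \<Rightarrow> real" where
  "matpow S Q 0 a b = (if a = b then 1 else 0)"
| "matpow S Q (Suc k) a b = (\<Sum>c\<in>S. Q a c * matpow S Q k c b)"

definition transp :: "'s set \<Rightarrow> ('s \<Rightarrow> 's \<Rightarrow> real) \<Rightarrow> real \<Rightarrow> 's \<Rightarrow> 's \<Rightarrow> real" where
  "transp S Q t a b = (\<Sum>k. t ^ k / fact k * matpow S Q k a b)"

definition restr :: "nat \<Rightarrow> (nat \<Rightarrow> nat multiset) \<Rightarrow> nat multiset list" where
  "restr l eta = map eta [1..<l+1]"

text \<open>Finite-dimensional distributions of the restricted process:
 fdd S Q l a s [(t1,c1),...,(tk,ck)] = P(W_{t_i}|[l] = c_i for all i | W_s = a).\<close>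
fun fdd :: "(nat \<Rightarrow> nat multiset) set \<Rightarrow> ((nat \<Rightarrow> nat multiset) \<Rightarrow> (nat \<Rightarrow> nat multiset) \<Rightarrow> real)
            \<Rightarrow> nat \<Rightarrow> (nat \<Rightarrow> nat multiset) \<Rightarrow> real \<Rightarrow> (real \<times> nat multiset list) list \<Rightarrow> real" where
  "fdd S Q l a s [] = 1"
| "fdd S Q l a s ((t, c) # rest) =
     (\<Sum>b\<in>{b\<in>S. restr l b = c}. transp S Q (t - s) a b * fdd S Q l b t rest)"

end

theory Submission
  imports Defs
begin

text \<open>Adjacent transpositions generate the permutations of \<open>{l+1..n}\<close>, so it suffices to
  exchange the parameters of two sites \<open>k\<close> and \<open>k+1\<close> with \<open>l < k < n\<close>. For such an exchange
  there is a stochastic kernel \<open>K\<close> intertwining the two generators, \<open>Q' K = K Q\<close>: it moves the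
  \<open>i\<close> smallest particles of site \<open>k+1\<close> to site \<open>k\<close>, with \<open>i\<close> chosen with geometric weights in
  \<open>c = x (k+1) / x k\<close>. The intertwining passes to the semigroups \<open>exp (t Q)\<close> and, since \<open>K\<close>
  never changes sites \<open>1..l\<close>, to the finite-dimensional distributions of the restricted process.
  Finally \<open>K\<close> is the identity on configurations with site \<open>k+1\<close> empty, such as the initial one.\<close>

section \<open>Intertwining generators on a finite state space\<close>

definition mat_apply :: "'s set \<Rightarrow> ('s \<Rightarrow> 's \<Rightarrow> real) \<Rightarrow> ('s \<Rightarrow> real) \<Rightarrow> 's \<Rightarrow> real" where
  "mat_apply S M f a = (\<Sum>c\<in>S. M a c * f c)"

definition intertwines :: "'s set \<Rightarrow> ('s \<Rightarrow> 's \<Rightarrow> real) \<Rightarrow> ('s \<Rightarrow> 's \<Rightarrow> real) \<Rightarrow> ('s \<Rightarrow> 's \<Rightarrow> real) \<Rightarrow> bool" where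
  "intertwines S Q' K Q \<longleftrightarrow>
     (\<forall>f. \<forall>a\<in>S. mat_apply S Q' (mat_apply S K f) a = mat_apply S K (mat_apply S Q f) a)"

lemma mat_apply_cong: "(\<And>c. c \<in> S \<Longrightarrow> f c = g c) \<Longrightarrow> mat_apply S M f a = mat_apply S M g a"
  unfolding mat_apply_def by (auto intro: sum.cong)

lemma sum_matpow_mult:
  assumes "finite S" "a \<in> S"
  shows "(\<Sum>b\<in>S. matpow S Q k a b * h b) = (mat_apply S Q ^^ k) h a"
  using assms(2)
proof (induction k arbitrary: a)
  case 0
  have "(\<Sum>b\<in>S. matpow S Q 0 a b * h b) = (\<Sum>b\<in>S. if a = b then h b else 0)"
    by (intro sum.cong) auto
  then show ?case using assms(1) 0 by simp
next
  case (Suc k)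
  have "(\<Sum>b\<in>S. matpow S Q (Suc k) a b * h b) = (\<Sum>b\<in>S. \<Sum>c\<in>S. Q a c * matpow S Q k c b * h b)"
    by (simp add: sum_distrib_right mult.assoc)
  also have "\<dots> = (\<Sum>c\<in>S. Q a c * (\<Sum>b\<in>S. matpow S Q k c b * h b))"
    by (subst sum.swap) (simp add: sum_distrib_left mult.assoc)
  also have "\<dots> = mat_apply S Q ((mat_apply S Q ^^ k) h) a"
    unfolding mat_apply_def[of S Q "(mat_apply S Q ^^ k) h"] by (intro sum.cong refl) (simp add: Suc.IH)
  finally show ?case by simp
qed

lemma abs_matpow_le:
  assumes "finite S" "a \<in> S" "\<And>u v. u \<in> S \<Longrightarrow> v \<in> S \<Longrightarrow> \<bar>Q u v\<bar> \<le> B"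
  shows "\<bar>matpow S Q k a b\<bar> \<le> (real (card S) * B) ^ k"
  using assms(2)
proof (induction k arbitrary: a)
  case (Suc k)
  have "0 \<le> B" using assms(3)[OF Suc.prems Suc.prems] by linarith
  have "\<bar>matpow S Q (Suc k) a b\<bar> \<le> (\<Sum>c\<in>S. \<bar>Q a c\<bar> * \<bar>matpow S Q k c b\<bar>)"
    by (simp add: sum_abs[THEN order_trans] abs_mult)
  also have "\<dots> \<le> (\<Sum>c\<in>S. B * (real (card S) * B) ^ k)"
    using Suc assms(3) \<open>0 \<le> B\<close> by (intro sum_mono mult_mono) auto
  finally show ?case by (simp add: algebra_simps)
qed simp

lemma summable_matpow_series:
  assumes "finite S" "a \<in> S"
  shows "summable (\<lambda>k. t ^ k / fact k * matpow S Q k a b)"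
proof -
  define B where "B = (\<Sum>u\<in>S. \<Sum>v\<in>S. \<bar>Q u v\<bar>)"
  have "\<bar>Q u v\<bar> \<le> B" if "u \<in> S" "v \<in> S" for u v
  proof -
    have "\<bar>Q u v\<bar> \<le> (\<Sum>v\<in>S. \<bar>Q u v\<bar>)"
      using that assms(1) by (intro member_le_sum) auto
    also have "\<dots> \<le> B"
      unfolding B_def using that assms(1) by (intro member_le_sum sum_nonneg) auto
    finally show ?thesis .
  qed
  then have bound: "\<bar>matpow S Q k a b\<bar> \<le> (real (card S) * B) ^ k" for k
    by (rule abs_matpow_le[OF assms])
  show ?thesis
  proof (rule summable_comparison_test'[OF summable_exp[of "\<bar>t\<bar> * (real (card S) * B)"]])
    fix k
    have "norm (t ^ k / fact k * matpow S Q k a b) = \<bar>t\<bar> ^ k * \<bar>matpow S Q k a b\<bar> / fact k"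
      by (simp add: abs_mult power_abs)
    also have "\<dots> \<le> \<bar>t\<bar> ^ k * (real (card S) * B) ^ k / fact k"
      by (intro divide_right_mono mult_left_mono bound) auto
    finally show "norm (t ^ k / fact k * matpow S Q k a b) \<le> inverse (fact k) * (\<bar>t\<bar> * (real (card S) * B)) ^ k"
      by (simp add: power_mult_distrib divide_inverse mult_ac)
  qed
qed

lemma summable_mat_apply_series:
  assumes "finite S" "a \<in> S"
  shows "summable (\<lambda>k. t ^ k / fact k * (mat_apply S Q ^^ k) h a)"
proof -
  have "summable (\<lambda>k. \<Sum>b\<in>S. t ^ k / fact k * matpow S Q k a b * h b)"
    by (intro summable_sum summable_mult2 summable_matpow_series assms)
  then show ?thesis
    by (simp add: sum_matpow_mult[OF assms, symmetric] sum_distrib_left mult.assoc)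
qed

lemma sum_transp_mult:
  assumes "finite S" "a \<in> S"
  shows "(\<Sum>b\<in>S. transp S Q t a b * h b) = (\<Sum>k. t ^ k / fact k * (mat_apply S Q ^^ k) h a)"
proof -
  have "(\<Sum>b\<in>S. transp S Q t a b * h b) = (\<Sum>b\<in>S. \<Sum>k. t ^ k / fact k * matpow S Q k a b * h b)"
    unfolding transp_def by (intro sum.cong refl suminf_mult2 summable_matpow_series assms)
  also have "\<dots> = (\<Sum>k. \<Sum>b\<in>S. t ^ k / fact k * matpow S Q k a b * h b)"
    by (intro suminf_sum[symmetric] summable_mult2 summable_matpow_series assms)
  also have "\<dots> = (\<Sum>k. t ^ k / fact k * (mat_apply S Q ^^ k) h a)"
    by (simp add: sum_matpow_mult[OF assms, symmetric] sum_distrib_left mult.assoc)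
  finally show ?thesis .
qed

lemma funpow_mat_apply_intertwining:
  assumes "intertwines S Q' K Q" "a \<in> S"
  shows "(mat_apply S Q' ^^ k) (mat_apply S K f) a = mat_apply S K ((mat_apply S Q ^^ k) f) a"
  using assms(2)
proof (induction k arbitrary: a)
  case (Suc k)
  have "(mat_apply S Q' ^^ Suc k) (mat_apply S K f) a
      = mat_apply S Q' (mat_apply S K ((mat_apply S Q ^^ k) f)) a"
    using Suc.IH by (auto intro: mat_apply_cong)
  also have "\<dots> = mat_apply S K ((mat_apply S Q ^^ Suc k) f) a"
    using assms(1) Suc.prems unfolding intertwines_def by simp
  finally show ?case .
qed simp

lemma transp_intertwining:
  assumes S: "finite S" and QK: "intertwines S Q' K Q" and a: "a \<in> S"
  shows "(\<Sum>b\<in>S. transp S Q' t a b * mat_apply S K h b)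
       = mat_apply S K (\<lambda>d. \<Sum>b\<in>S. transp S Q t d b * h b) a"
proof -
  have "(\<Sum>b\<in>S. transp S Q' t a b * mat_apply S K h b)
      = (\<Sum>k. t ^ k / fact k * mat_apply S K ((mat_apply S Q ^^ k) h) a)"
    by (simp add: sum_transp_mult[OF S a] funpow_mat_apply_intertwining[OF QK a])
  also have "\<dots> = (\<Sum>k. \<Sum>d\<in>S. K a d * (t ^ k / fact k * (mat_apply S Q ^^ k) h d))"
    by (simp add: mat_apply_def sum_distrib_left mult.assoc mult.left_commute)
  also have "\<dots> = (\<Sum>d\<in>S. K a d * (\<Sum>k. t ^ k / fact k * (mat_apply S Q ^^ k) h d))"
    by (subst suminf_sum) (auto intro!: sum.cong suminf_mult summable_mult summable_mat_apply_series S
        simp del: times_divide_eq_left times_divide_eq_right)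
  also have "\<dots> = mat_apply S K (\<lambda>d. \<Sum>b\<in>S. transp S Q t d b * h b) a"
    unfolding mat_apply_def[of S K] by (intro sum.cong refl) (simp add: sum_transp_mult[OF S])
  finally show ?thesis .
qed

lemma fdd_Cons_eq_sum:
  assumes "finite S"
  shows "fdd S Q l a s ((t, c) # obs)
       = (\<Sum>b\<in>S. transp S Q (t - s) a b * (if restr l b = c then fdd S Q l b t obs else 0))"
  using assms by (simp add: sum.inter_filter[symmetric] if_distrib cong: if_cong)

lemma mat_apply_restr_indicator:
  assumes K: "\<And>d. d \<in> S \<Longrightarrow> K b d \<noteq> 0 \<Longrightarrow> restr l d = restr l b"
  shows "mat_apply S K (\<lambda>d. if restr l d = c then g d else 0) b
       = (if restr l b = c then mat_apply S K g b else 0)"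
  unfolding mat_apply_def using K by (auto intro!: sum.cong sum.neutral; metis)

lemma fdd_intertwining:
  assumes S: "finite S" and QK: "intertwines S Q' K Q"
    and K_restr: "\<And>a d. a \<in> S \<Longrightarrow> d \<in> S \<Longrightarrow> K a d \<noteq> 0 \<Longrightarrow> restr l d = restr l a"
    and K_stoch: "\<And>a. a \<in> S \<Longrightarrow> (\<Sum>d\<in>S. K a d) = 1"
    and a: "a \<in> S"
  shows "fdd S Q' l a s obs = mat_apply S K (\<lambda>d. fdd S Q l d s obs) a"
  using a
proof (induction obs arbitrary: a s)
  case Nil
  then show ?case using K_stoch by (simp add: mat_apply_def)
next
  case (Cons o' obs)
  obtain t c where o': "o' = (t, c)" by fastforce
  let ?h = "\<lambda>d. if restr l d = c then fdd S Q l d t obs else 0"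
  have "fdd S Q' l a s ((t, c) # obs)
      = (\<Sum>b\<in>S. transp S Q' (t - s) a b * mat_apply S K ?h b)"
    unfolding fdd_Cons_eq_sum[OF S]
    using Cons.IH by (intro sum.cong refl) (simp add: mat_apply_restr_indicator K_restr)
  also have "\<dots> = mat_apply S K (\<lambda>d. fdd S Q l d s ((t, c) # obs)) a"
    unfolding fdd_Cons_eq_sum[OF S] by (rule transp_intertwining[OF S QK Cons.prems])
  finally show ?case unfolding o' .
qed

section \<open>Sorted lists of particles\<close>

lemma sorted_le_last: "sorted L \<Longrightarrow> y \<in> set L \<Longrightarrow> y \<le> last L"
proof -
  assume s: "sorted L" and y: "y \<in> set L"
  then obtain j where j: "j < length L" "L ! j = y" by (auto simp: in_set_conv_nth)
  then have "L ! j \<le> L ! (length L - 1)" using s by (intro sorted_nth_mono) auto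
  moreover have "L \<noteq> []" using j by auto
  ultimately show ?thesis using j by (simp add: last_conv_nth)
qed

lemma sorted_list_of_multiset_remove_Max:
  assumes "V \<noteq> {#}"
  shows "Max_mset V = last (sorted_list_of_multiset V)" "sorted_list_of_multiset (V - {#Max_mset V#}) = butlast (sorted_list_of_multiset V)"
proof -
  let ?L = "sorted_list_of_multiset V"
  have ne: "?L \<noteq> []" using assms by (metis mset_sorted_list_of_multiset mset.simps(1))
  show 1: "Max_mset V = last ?L"
    by (rule Max_eqI) (use ne sorted_le_last[of ?L] last_in_set[OF ne] in auto)
  have "V = mset (butlast ?L @ [last ?L])" using ne by simp
  then have "V = add_mset (last ?L) (mset (butlast ?L))" by simp
  then have "V - {#last ?L#} = mset (butlast ?L)" by (metis add_mset_remove_trivial)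
  then show "sorted_list_of_multiset (V - {#Max_mset V#}) = butlast ?L" unfolding 1
    by (simp add: sorted_sort_id sorted_butlast)
qed

lemma Max_mset_drop_sorted:
  assumes s: "sorted L" and i: "i < length L"
  shows "mset (drop i L) \<noteq> {#}" "Max_mset (mset (drop i L)) = last L"
        "mset (drop i L) - {#Max_mset (mset (drop i L))#} = mset (drop i (butlast L))"
proof -
  have ne: "L \<noteq> []" using i by auto
  have "drop i L = drop i (butlast L @ [last L])" using ne by simp
  also have "\<dots> = drop i (butlast L) @ [last L]" using i by (simp add: drop_append)
  finally have d: "drop i L = drop i (butlast L) @ [last L]" .
  show "mset (drop i L) \<noteq> {#}" using i by simp
  show m: "Max_mset (mset (drop i L)) = last L"
  proof (rule Max_eqI)
    fix y assume "y \<in> set_mset (mset (drop i L))"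
    then have "y \<in> set L" by (metis in_set_dropD set_mset_mset)
    then show "y \<le> last L" by (rule sorted_le_last[OF s])
  qed (use d in auto)
  show "mset (drop i L) - {#Max_mset (mset (drop i L))#} = mset (drop i (butlast L))"
    unfolding m by (subst d) simp
qed

lemma insort_eq_take_drop:
  "insort M L = take (length (takeWhile (\<lambda>y. \<not> M \<le> y) L)) L @ M # drop (length (takeWhile (\<lambda>y. \<not> M \<le> y) L)) L"
proof -
  have "insort M L = takeWhile (\<lambda>y. \<not> M \<le> y) L @ M # dropWhile (\<lambda>y. \<not> M \<le> y) L"
    by (induction L) auto
  then show ?thesis by (metis takeWhile_eq_take dropWhile_eq_drop)
qed

lemma mset_take_drop_insort:
  fixes L :: "nat list" and M :: nat
  defines "p \<equiv> length (takeWhile (\<lambda>y. \<not> M \<le> y) L)"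
  shows "mset (take i (insort M L)) = (if i \<le> p then mset (take i L) else add_mset M (mset (take (i - 1) L)))"
        "mset (drop i (insort M L)) = (if i \<le> p then add_mset M (mset (drop i L)) else mset (drop (i - 1) L))"
proof -
  define A B where "A = take p L" and "B = drop p L"
  have "p \<le> length L" unfolding p_def by (rule length_takeWhile_le)
  then have L: "L = A @ B" and A: "length A = p" and ins: "insort M L = A @ M # B"
    using insort_eq_take_drop[of M L] by (simp_all add: A_def B_def p_def)
  show "mset (take i (insort M L)) = (if i \<le> p then mset (take i L) else add_mset M (mset (take (i - 1) L)))"
    unfolding ins using A by (cases "i \<le> p") (auto simp: L take_Cons' drop_Cons' not_le)
  show "mset (drop i (insort M L)) = (if i \<le> p then add_mset M (mset (drop i L)) else mset (drop (i - 1) L))"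
    unfolding ins using A by (cases "i \<le> p") (auto simp: L take_Cons' drop_Cons' not_le)
qed

lemma Max_mset_add_take_below:
  fixes L :: "nat list" and U :: "nat multiset"
  assumes U: "U \<noteq> {#}" and i: "i \<le> length (takeWhile (\<lambda>y. \<not> Max_mset U \<le> y) L)"
  shows "Max_mset (U + mset (take i L)) = Max_mset U"
proof (rule Max_eqI)
  let ?M = "Max_mset U"
  let ?p = "length (takeWhile (\<lambda>y. \<not> ?M \<le> y) L)"
  fix y assume y: "y \<in> set_mset (U + mset (take i L))"
  show "y \<le> ?M"
  proof (cases "y \<in># U")
    case True then show ?thesis by simp
  next
    case False
    then have "y \<in> set (take i L)" using y by simp
    moreover have "take i L = take i (take ?p L)" using i by (simp add: min_def)
    ultimately have "y \<in> set (take ?p L)" by (metis in_set_takeD)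
    then have "y \<in> set (takeWhile (\<lambda>y. \<not> ?M \<le> y) L)" by (metis takeWhile_eq_take)
    then show ?thesis by (auto dest: set_takeWhileD)
  qed
qed (use U in auto)

lemma Max_mset_add_take_Suc:
  fixes L :: "nat list" and U :: "nat multiset"
  assumes s: "sorted L" and j: "j < length L" and U: "\<forall>y\<in>#U. y \<le> L ! j"
  shows "Max_mset (U + mset (take (Suc j) L)) = L ! j"
        "U + mset (take (Suc j) L) - {#L ! j#} = U + mset (take j L)"
        "add_mset (L ! j) (mset (drop (Suc j) L)) = mset (drop j L)"
proof -
  have tk: "take (Suc j) L = take j L @ [L ! j]"
    by (rule take_Suc_conv_app_nth[OF j])
  show "Max_mset (U + mset (take (Suc j) L)) = L ! j"
  proof (rule Max_eqI)
    fix y assume y: "y \<in> set_mset (U + mset (take (Suc j) L))"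
    show "y \<le> L ! j"
    proof (cases "y \<in># U")
      case False
      then obtain i where "i \<le> j" "L ! i = y"
        using y j by (auto simp: in_set_conv_nth less_Suc_eq_le)
      then show ?thesis using s j by (metis sorted_nth_mono)
    qed (use U in simp)
  qed (use tk in auto)
  show "U + mset (take (Suc j) L) - {#L ! j#} = U + mset (take j L)"
    unfolding tk by simp
  show "add_mset (L ! j) (mset (drop (Suc j) L)) = mset (drop j L)"
    by (simp add: Cons_nth_drop_Suc[OF j, symmetric])
qed

section \<open>Two-site averages\<close>

definition shift_weight :: "real \<Rightarrow> nat \<Rightarrow> nat \<Rightarrow> real" where
  "shift_weight c m i = (if i = 0 then c ^ m else c ^ (m - i) * (1 - c))"

lemma shift_weight_Suc: "i \<le> m \<Longrightarrow> shift_weight c (Suc m) i = c * shift_weight c m i"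
  by (simp add: shift_weight_def Suc_diff_le)

lemma shift_weight_last: "shift_weight c (Suc m) (Suc m) = 1 - c"
  by (simp add: shift_weight_def)

lemma sum_shift_weight: "(\<Sum>i\<le>m. shift_weight c m i) = 1"
proof (induction m)
  case (Suc m)
  have "(\<Sum>i\<le>Suc m. shift_weight c (Suc m) i) = c * (\<Sum>i\<le>m. shift_weight c m i) + (1 - c)"
    by (simp add: shift_weight_Suc shift_weight_last sum_distrib_left)
  then show ?case using Suc by simp
qed (simp add: shift_weight_def)

lemma sum_shift_weight_Suc_pred:
  "(\<Sum>i\<le>Suc m. shift_weight c (Suc m) i * Y (i - 1)) = (\<Sum>i\<le>m. shift_weight c m i * Y i)"
proof -
  have "(\<Sum>i\<le>Suc m. shift_weight c (Suc m) i * Y (i - 1))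
      = c ^ Suc m * Y 0 + (\<Sum>i\<le>m. shift_weight c (Suc m) (Suc i) * Y i)"
    by (subst sum.atMost_Suc_shift) (simp add: shift_weight_def)
  also have "(\<Sum>i\<le>m. shift_weight c (Suc m) (Suc i) * Y i)
      = (1 - c) * c ^ m * Y 0 + (\<Sum>i\<in>{1..m}. shift_weight c m i * Y i)"
    by (simp add: sum.atMost_shift atMost_atLeast0 sum.atLeast_Suc_atMost shift_weight_def)
  also have "c ^ Suc m * Y 0 + ((1 - c) * c ^ m * Y 0 + (\<Sum>i\<in>{1..m}. shift_weight c m i * Y i))
      = (\<Sum>i\<le>m. shift_weight c m i * Y i)"
    by (simp add: atMost_atLeast0 sum.atLeast_Suc_atMost shift_weight_def algebra_simps)
  finally show ?thesis .
qed

lemma shift_weight_intertwining_identity: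
  fixes Y Z E :: "nat \<Rightarrow> real"
  assumes \<alpha>: "\<alpha> = c * \<beta>" and E: "E m = Y m"
  shows "\<beta> * ((\<Sum>i\<le>m. shift_weight c (Suc m) i * Z i) + (1 - c) * Y m - (\<Sum>i\<le>m. shift_weight c m i * Y i))
       + \<alpha> * ((if m = 0 then Y 0 else \<Sum>i\<le>m - 1. shift_weight c (m - 1) i * E i) - (\<Sum>i\<le>m. shift_weight c m i * Y i))
     = (\<Sum>i\<le>m. shift_weight c m i * (\<alpha> * (Z i - Y i) + \<beta> * (E i - Y i)))"
proof -
  have Z: "(\<Sum>i\<le>m. shift_weight c (Suc m) i * Z i) = c * (\<Sum>i\<le>m. shift_weight c m i * Z i)"
    by (simp add: shift_weight_Suc sum_distrib_left mult.assoc)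
  have rhs: "(\<Sum>i\<le>m. shift_weight c m i * (\<alpha> * (Z i - Y i) + \<beta> * (E i - Y i)))
      = \<alpha> * (\<Sum>i\<le>m. shift_weight c m i * Z i) - \<alpha> * (\<Sum>i\<le>m. shift_weight c m i * Y i)
        + \<beta> * (\<Sum>i\<le>m. shift_weight c m i * E i) - \<beta> * (\<Sum>i\<le>m. shift_weight c m i * Y i)"
    by (simp add: sum.distrib sum_subtractf sum_distrib_left algebra_simps)
  show ?thesis
  proof (cases m)
    case 0
    then show ?thesis using \<alpha> E by (simp add: rhs Z shift_weight_def algebra_simps)
  next
    case (Suc m')
    have E': "(\<Sum>i\<le>m. shift_weight c m i * E i) = c * (\<Sum>i\<le>m - 1. shift_weight c (m - 1) i * E i) + (1 - c) * Y m"
      using Suc E by (simp add: shift_weight_Suc shift_weight_last sum_distrib_left mult.assoc)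
    show ?thesis unfolding rhs Z E' using \<alpha> Suc by (simp add: algebra_simps)
  qed
qed

text \<open>The \<open>i\<close> smallest particles of \<open>V\<close> move to \<open>U\<close> with weight \<open>shift_weight c (size V) i\<close>:
  scanning \<open>V\<close> downwards from its largest particle, each one stays with probability \<open>c\<close> until the
  first one that moves, which takes all smaller ones along.\<close>

definition shift_avg :: "(nat multiset \<Rightarrow> nat multiset \<Rightarrow> real) \<Rightarrow> real \<Rightarrow> nat multiset \<Rightarrow> nat multiset \<Rightarrow> real" where
  "shift_avg G c U V = (\<Sum>i\<le>size V. shift_weight c (size V) i *
      G (U + mset (take i (sorted_list_of_multiset V))) (mset (drop i (sorted_list_of_multiset V))))"

definition first_jump :: "(nat multiset \<Rightarrow> nat multiset \<Rightarrow> 'a) \<Rightarrow> nat multiset \<Rightarrow> nat multiset \<Rightarrow> 'a" where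
  "first_jump G P R = (if P = {#} then G P R else G (P - {#Max_mset P#}) (add_mset (Max_mset P) R))"

definition second_jump :: "(nat multiset \<Rightarrow> nat multiset \<Rightarrow> 'a) \<Rightarrow> (nat multiset \<Rightarrow> nat multiset \<Rightarrow> nat \<Rightarrow> 'a)
    \<Rightarrow> nat multiset \<Rightarrow> nat multiset \<Rightarrow> 'a" where
  "second_jump G H P R = (if R = {#} then G P R else H P (R - {#Max_mset R#}) (Max_mset R))"

text \<open>The jumps out of two consecutive sites with contents \<open>P\<close> and \<open>R\<close>, at rates \<open>\<alpha>\<close> and \<open>\<beta>\<close>;
  \<open>H P R e\<close> is the value of the observable after particle \<open>e\<close> has left the second site.\<close>

definition pair_gen :: "real \<Rightarrow> real \<Rightarrow> (nat multiset \<Rightarrow> nat multiset \<Rightarrow> real) \<Rightarrow> (nat multiset \<Rightarrow> nat multiset \<Rightarrow> nat \<Rightarrow> real)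
    \<Rightarrow> nat multiset \<Rightarrow> nat multiset \<Rightarrow> real" where
  "pair_gen \<alpha> \<beta> G H P R = \<alpha> * (first_jump G P R - G P R) + \<beta> * (second_jump G H P R - G P R)"

lemma shift_avg_empty [simp]: "shift_avg G c U {#} = G U {#}"
  by (simp add: shift_avg_def shift_weight_def)

lemma first_jump_take_Suc:
  assumes "sorted L" "j < length L" "\<forall>y\<in>#U. y \<le> L ! j"
  shows "first_jump G (U + mset (take (Suc j) L)) (mset (drop (Suc j) L)) = G (U + mset (take j L)) (mset (drop j L))"
  using Max_mset_add_take_Suc[OF assms] assms(2) by (simp add: first_jump_def)

lemma first_jump_insort:
  assumes L: "sorted L" and U: "U \<noteq> {#}" and i: "i \<le> length L"
  defines "M \<equiv> Max_mset U"
  shows "G (U - {#M#} + mset (take i (insort M L))) (mset (drop i (insort M L)))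
       = first_jump G (U + mset (take i L)) (mset (drop i L))"
proof -
  define p where "p = length (takeWhile (\<lambda>y. \<not> M \<le> y) L)"
  have M: "M \<in># U" using U by (simp add: M_def)
  note ins = mset_take_drop_insort[where i = i and L = L and M = M, folded p_def]
  show ?thesis
  proof (cases "i \<le> p")
    case True
    then show ?thesis
      using ins i Max_mset_add_take_below[OF U, of i L] M U
      by (simp add: first_jump_def p_def M_def multiset_diff_union_assoc[symmetric] add_mset_remove_trivial)
  next
    case False
    then obtain j where j: "i = Suc j" "p \<le> j" "j < length L" using i by (cases i) auto
    have "M \<le> L ! p" using nth_length_takeWhile[of "\<lambda>y. \<not> M \<le> y" L] j by (simp add: p_def)
    also have "L ! p \<le> L ! j" using L j by (simp add: sorted_nth_mono)
    finally have below: "\<forall>y\<in>#U. y \<le> L ! j" unfolding M_def by (meson Max_ge finite_set_mset le_trans)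
    then show ?thesis
      using ins j M False first_jump_take_Suc[OF L j(3) below, of G] by (simp add: insert_DiffM)
  qed
qed

lemma first_jump_shift_avg:
  fixes V :: "nat multiset"
  defines "L \<equiv> sorted_list_of_multiset V"
  shows "first_jump (shift_avg G c) U V
       = (\<Sum>i\<le>size V. shift_weight c (Suc (size V)) i * first_jump G (U + mset (take i L)) (mset (drop i L)))
         + (1 - c) * G (U + V) {#}"
proof -
  have sL: "sorted L" and lL: "length L = size V" and VL: "mset L = V"
    unfolding L_def by (auto simp flip: size_mset)
  show ?thesis
  proof (cases "U = {#}")
    case True
    let ?Y = "\<lambda>i. G (U + mset (take i L)) (mset (drop i L))"
    have "first_jump G (U + mset (take i L)) (mset (drop i L)) = ?Y (i - 1)" if "i \<le> size V" for i
      using that True first_jump_take_Suc[OF sL, of "i - 1" U G] lL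
      by (cases i) (auto simp: first_jump_def)
    then have "(\<Sum>i\<le>size V. shift_weight c (Suc (size V)) i * first_jump G (U + mset (take i L)) (mset (drop i L)))
          + (1 - c) * G (U + V) {#}
        = (\<Sum>i\<le>Suc (size V). shift_weight c (Suc (size V)) i * ?Y (i - 1))"
      using lL VL by (simp add: shift_weight_last)
    also have "\<dots> = shift_avg G c U V"
      unfolding sum_shift_weight_Suc_pred[of c "size V" ?Y] by (simp add: shift_avg_def L_def)
    finally show ?thesis using True by (simp add: first_jump_def)
  next
    case False
    let ?M = "Max_mset U"
    let ?G = "\<lambda>i. G (U - {#?M#} + mset (take i (insort ?M L))) (mset (drop i (insort ?M L)))"
    have "?G (Suc (size V)) = G (U + V) {#}"
      using lL VL False by (simp add: insert_DiffM)
    then have "first_jump (shift_avg G c) U V = (\<Sum>i\<le>size V. shift_weight c (Suc (size V)) i * ?G i)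
        + (1 - c) * G (U + V) {#}"
      using False by (simp add: first_jump_def shift_avg_def L_def shift_weight_last)
    also have "(\<Sum>i\<le>size V. shift_weight c (Suc (size V)) i * ?G i)
        = (\<Sum>i\<le>size V. shift_weight c (Suc (size V)) i * first_jump G (U + mset (take i L)) (mset (drop i L)))"
      using first_jump_insort[OF sL False] lL by (intro sum.cong) auto
    finally show ?thesis .
  qed
qed

lemma second_jump_shift_avg:
  fixes V :: "nat multiset"
  defines "L \<equiv> sorted_list_of_multiset V"
  assumes V: "V \<noteq> {#}"
  shows "second_jump (shift_avg G c) (\<lambda>P R e. shift_avg (\<lambda>A B. H A B e) c P R) U V
       = (\<Sum>i\<le>size V - 1. shift_weight c (size V - 1) i * second_jump G H (U + mset (take i L)) (mset (drop i L)))"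
proof -
  have sL: "sorted L" and lL: "length L = size V"
    unfolding L_def by (auto simp flip: size_mset)
  note Max = sorted_list_of_multiset_remove_Max[OF V, folded L_def]
  have rem: "sorted_list_of_multiset (V - {#last L#}) = butlast L" using Max by simp
  have sz: "size (V - {#last L#}) = size V - 1"
    using V Max(1) by (metis Max_in_mset size_Diff_singleton)
  have "second_jump (shift_avg G c) (\<lambda>P R e. shift_avg (\<lambda>A B. H A B e) c P R) U V
      = (\<Sum>i\<le>size V - 1. shift_weight c (size V - 1) i *
           H (U + mset (take i (butlast L))) (mset (drop i (butlast L))) (last L))"
    using V by (simp add: second_jump_def shift_avg_def Max(1) rem sz)
  also have "\<dots> = (\<Sum>i\<le>size V - 1. shift_weight c (size V - 1) i * second_jump G H (U + mset (take i L)) (mset (drop i L)))"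
  proof (intro sum.cong refl)
    fix i assume "i \<in> {..size V - 1}"
    then have i: "i < length L" using V lL by (auto simp: nonempty_has_size)
    then show "shift_weight c (size V - 1) i * H (U + mset (take i (butlast L))) (mset (drop i (butlast L))) (last L)
        = shift_weight c (size V - 1) i * second_jump G H (U + mset (take i L)) (mset (drop i L))"
      using Max_mset_drop_sorted[OF sL i] by (simp add: second_jump_def take_butlast)
  qed
  finally show ?thesis .
qed

text \<open>The intertwining relation on the two sites whose rates are exchanged.\<close>

lemma pair_gen_shift_avg:
  assumes \<alpha>: "\<alpha> = c * \<beta>"
  shows "pair_gen \<beta> \<alpha> (shift_avg G c) (\<lambda>P R e. shift_avg (\<lambda>A B. H A B e) c P R) U V
       = shift_avg (pair_gen \<alpha> \<beta> G H) c U V"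
proof -
  define L where "L = sorted_list_of_multiset V"
  define m where "m = size V"
  define Y where "Y i = G (U + mset (take i L)) (mset (drop i L))" for i
  define Z where "Z i = first_jump G (U + mset (take i L)) (mset (drop i L))" for i
  define E where "E i = second_jump G H (U + mset (take i L)) (mset (drop i L))" for i
  have lL: "length L = m" and VL: "mset L = V"
    unfolding L_def m_def by (auto simp flip: size_mset)
  have avg: "shift_avg G c U V = (\<Sum>i\<le>m. shift_weight c m i * Y i)"
    by (simp add: shift_avg_def Y_def L_def m_def)
  have first: "first_jump (shift_avg G c) U V = (\<Sum>i\<le>m. shift_weight c (Suc m) i * Z i) + (1 - c) * Y m"
    using first_jump_shift_avg[of G c U V] lL VL by (simp add: Y_def Z_def L_def m_def)
  have second: "second_jump (shift_avg G c) (\<lambda>P R e. shift_avg (\<lambda>A B. H A B e) c P R) U V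
      = (if m = 0 then Y 0 else \<Sum>i\<le>m - 1. shift_weight c (m - 1) i * E i)"
    using second_jump_shift_avg[of V G c H U] lL VL
    by (auto simp: second_jump_def Y_def E_def L_def m_def)
  have "E m = Y m" using lL by (simp add: E_def Y_def second_jump_def)
  moreover have "shift_avg (pair_gen \<alpha> \<beta> G H) c U V
      = (\<Sum>i\<le>m. shift_weight c m i * (\<alpha> * (Z i - Y i) + \<beta> * (E i - Y i)))"
    by (simp add: shift_avg_def pair_gen_def Y_def Z_def E_def L_def m_def)
  ultimately show ?thesis
    unfolding pair_gen_def[of \<beta> \<alpha>] avg first second
    by (simp add: shift_weight_intertwining_identity[OF \<alpha>])
qed

section \<open>The generator of the mTAZRP\<close>

definition jump_rate :: "(nat \<Rightarrow> real) \<Rightarrow> (nat \<Rightarrow> nat multiset) \<Rightarrow> nat \<Rightarrow> real" where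
  "jump_rate x a j = (if a j \<noteq> {#} then 1 / x j else 0)"

definition gen_apply :: "nat \<Rightarrow> (nat \<Rightarrow> real) \<Rightarrow> ((nat \<Rightarrow> nat multiset) \<Rightarrow> real) \<Rightarrow> (nat \<Rightarrow> nat multiset) \<Rightarrow> real" where
  "gen_apply n x f a = (\<Sum>j\<in>{1..n}. jump_rate x a j * (f (step n a j) - f a))"

lemma nxt_in_sites: "j \<in> {1..n} \<Longrightarrow> nxt n j \<in> {1..n}"
  by (auto simp: nxt_def)

lemma nxt_neq: "2 \<le> n \<Longrightarrow> j \<in> {1..n} \<Longrightarrow> nxt n j \<noteq> j"
  by (auto simp: nxt_def)

lemma nxt_eq_Suc: "nxt n j = Suc k \<Longrightarrow> 1 \<le> k \<Longrightarrow> j \<in> {1..n} \<Longrightarrow> j = k"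
  by (auto simp: nxt_def split: if_splits)

lemma step_eq:
  assumes "nxt n j \<noteq> j"
  shows "step n a j = a(j := a j - {#Max_mset (a j)#}, nxt n j := add_mset (Max_mset (a j)) (a (nxt n j)))"
  using assms by (simp add: step_def Let_def)

lemma sum_cong_except_two:
  fixes g h :: "'a \<Rightarrow> 'b::comm_monoid_add"
  assumes "finite I" "j \<in> I" "q \<in> I" "j \<noteq> q"
    and "\<And>i. i \<in> I \<Longrightarrow> i \<noteq> j \<Longrightarrow> i \<noteq> q \<Longrightarrow> g i = h i"
    and "g j + g q = h j + h q"
  shows "sum g I = sum h I"
proof -
  have split: "sum f I = f j + f q + sum f (I - {j, q})" for f :: "'a \<Rightarrow> 'b"
  proof -
    have "sum f I = f j + sum f (I - {j})" using assms(1,2) by (rule sum.remove)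
    also have "sum f (I - {j}) = f q + sum f (I - {j} - {q})"
      using assms(1,3,4) by (intro sum.remove) auto
    finally show ?thesis by (simp add: add.assoc Diff_insert2[symmetric])
  qed
  have "sum g (I - {j, q}) = sum h (I - {j, q})"
    using assms(5) by (intro sum.cong) auto
  then show ?thesis
    using assms(6) split[of g] split[of h] by simp
qed

lemma fun_upd_pair_in_Conf:
  assumes a: "a \<in> Conf n lam" and jq: "j \<in> {1..n}" "q \<in> {1..n}" "j \<noteq> q"
    and PR: "P + R = a j + a q"
  shows "a(j := P, q := R) \<in> Conf n lam"
proof -
  have "sum (a(j := P, q := R)) {1..n} = sum a {1..n}"
    by (rule sum_cong_except_two[OF _ jq]) (use PR jq in auto)
  moreover have "(a(j := P, q := R)) i = {#}" if "i \<notin> {1..n}" for i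
    using a jq that unfolding Conf_def by auto
  ultimately show ?thesis using a unfolding Conf_def by blast
qed

lemma step_in_Conf:
  assumes a: "a \<in> Conf n lam" and j: "j \<in> {1..n}" "a j \<noteq> {#}" and n: "2 \<le> n"
  shows "step n a j \<in> Conf n lam"
  unfolding step_eq[OF nxt_neq[OF n j(1)]]
  by (rule fun_upd_pair_in_Conf[OF a j(1) nxt_in_sites[OF j(1)] not_sym[OF nxt_neq[OF n j(1)]]])
     (use j(2) in simp)

lemma diff_Max_mset_neq: "M \<noteq> {#} \<Longrightarrow> M - {#Max_mset M#} \<noteq> M"
proof
  assume ne: "M \<noteq> {#}" and eq: "M - {#Max_mset M#} = M"
  from ne have "size (M - {#Max_mset M#}) = size M - 1" "0 < size M"
    by (simp_all add: size_Diff_singleton nonempty_has_size)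
  then show False unfolding eq by linarith
qed

lemma step_neq:
  assumes "a j \<noteq> {#}" "nxt n j \<noteq> j"
  shows "step n a j \<noteq> a"
proof
  assume fixed: "step n a j = a"
  have "step n a j j = a j - {#Max_mset (a j)#}"
    using assms(2) by (simp add: step_eq)
  then have "a j - {#Max_mset (a j)#} = a j"
    unfolding fixed ..
  with assms(1) show False by (metis diff_Max_mset_neq)
qed

lemma finite_submultisets: "finite {M. M \<subseteq># N}"
proof (rule finite_subset)
  show "{M. M \<subseteq># N} \<subseteq> (\<Union>k\<le>size N. multisets_of_size (set_mset N) k)"
    by (auto simp: multisets_of_size_def dest: set_mset_mono size_mset_mono)
qed auto

lemma finite_Conf: "finite (Conf n lam)"
proof (rule finite_subset)
  have "f j \<subseteq># lam" if "f \<in> Conf n lam" "j \<in> {1..n}" for f j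
    using that unfolding Conf_def by (metis (mono_tags) finite_atLeastAtMost mem_Collect_eq
        mset_subset_eq_add_left sum.remove)
  then show "Conf n lam \<subseteq> {f. \<forall>j. (j \<in> {1..n} \<longrightarrow> f j \<in> {M. M \<subseteq># lam}) \<and> (j \<notin> {1..n} \<longrightarrow> f j = {#})}"
    unfolding Conf_def by blast
  show "finite \<dots>"
    by (intro finite_set_of_finite_funs finite_submultisets finite_atLeastAtMost)
qed

lemma mat_apply_gen:
  assumes a: "a \<in> Conf n lam" and n: "2 \<le> n"
  shows "mat_apply (Conf n lam) (gen n lam x) f a = gen_apply n x f a"
proof -
  let ?S = "Conf n lam"
  have jumps: "(\<Sum>b\<in>?S - {a}. rate n x a b * g b) = (\<Sum>j\<in>{1..n}. jump_rate x a j * g (step n a j))" for g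
  proof -
    have "(\<Sum>b\<in>?S - {a}. rate n x a b * g b)
        = (\<Sum>j\<in>{1..n}. \<Sum>b\<in>?S - {a}. if step n a j = b then jump_rate x a j * g b else 0)"
      unfolding rate_def jump_rate_def sum_distrib_right
      by (subst sum.swap) (intro sum.cong refl, auto)
    \<comment> \<open>no jump is lost by leaving out \<open>a\<close>, as a firing site always changes the configuration\<close>
    also have "\<dots> = (\<Sum>j\<in>{1..n}. jump_rate x a j * g (step n a j))"
      using finite_Conf step_in_Conf[OF a _ _ n] step_neq nxt_neq[OF n]
      by (intro sum.cong refl) (auto simp: sum.delta jump_rate_def)
    finally show ?thesis .
  qed
  have "mat_apply ?S (gen n lam x) f a = gen n lam x a a * f a + (\<Sum>b\<in>?S - {a}. gen n lam x a b * f b)"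
    unfolding mat_apply_def using a finite_Conf by (simp add: sum.remove)
  also have "(\<Sum>b\<in>?S - {a}. gen n lam x a b * f b) = (\<Sum>b\<in>?S - {a}. rate n x a b * f b)"
    by (intro sum.cong) (auto simp: gen_def)
  also have "gen n lam x a a = - (\<Sum>b\<in>?S - {a}. rate n x a b * 1)"
    by (simp add: gen_def)
  finally show ?thesis
    unfolding jumps gen_apply_def
    by (simp add: sum_subtractf sum_distrib_left sum_distrib_right mult.commute right_diff_distrib)
qed

lemma gen_apply_cong:
  assumes a: "a \<in> Conf n lam" and n: "2 \<le> n" and fg: "\<And>b. b \<in> Conf n lam \<Longrightarrow> f b = g b"
  shows "gen_apply n x f a = gen_apply n x g a"
  unfolding gen_apply_def jump_rate_def
  using fg[OF a] fg[OF step_in_Conf[OF a _ _ n]] by (intro sum.cong) auto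

section \<open>The kernel of an adjacent swap\<close>

definition shift_config :: "nat \<Rightarrow> nat \<Rightarrow> (nat \<Rightarrow> nat multiset) \<Rightarrow> nat \<Rightarrow> nat multiset" where
  "shift_config k i a = a(k := a k + mset (take i (sorted_list_of_multiset (a (Suc k)))),
                          Suc k := mset (drop i (sorted_list_of_multiset (a (Suc k)))))"

definition swap_apply :: "nat \<Rightarrow> real \<Rightarrow> ((nat \<Rightarrow> nat multiset) \<Rightarrow> real) \<Rightarrow> (nat \<Rightarrow> nat multiset) \<Rightarrow> real" where
  "swap_apply k c f a = (\<Sum>i\<le>size (a (Suc k)). shift_weight c (size (a (Suc k))) i * f (shift_config k i a))"

definition swap_kernel :: "nat \<Rightarrow> real \<Rightarrow> (nat \<Rightarrow> nat multiset) \<Rightarrow> (nat \<Rightarrow> nat multiset) \<Rightarrow> real" where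
  "swap_kernel k c a d = swap_apply k c (\<lambda>e. of_bool (e = d)) a"

lemma swap_apply_eq_shift_avg:
  "swap_apply k c f a = shift_avg (\<lambda>P R. f (a(k := P, Suc k := R))) c (a k) (a (Suc k))"
  by (simp add: swap_apply_def shift_avg_def shift_config_def)

lemma swap_apply_fun_upd:
  "swap_apply k c f (a(k := P, Suc k := R)) = shift_avg (\<lambda>A B. f (a(k := A, Suc k := B))) c P R"
  by (simp add: swap_apply_eq_shift_avg)

lemma swap_apply_empty: "a (Suc k) = {#} \<Longrightarrow> swap_apply k c f a = f a"
  by (simp add: swap_apply_eq_shift_avg fun_upd_idem)

lemma shift_config_in_Conf:
  assumes "a \<in> Conf n lam" "1 \<le> k" "Suc k \<le> n"
  shows "shift_config k i a \<in> Conf n lam"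
  unfolding shift_config_def
  by (rule fun_upd_pair_in_Conf) (use assms in \<open>auto simp: add.assoc simp flip: mset_append\<close>)

lemma mat_apply_swap_kernel:
  assumes a: "a \<in> Conf n lam" and k: "1 \<le> k" "Suc k \<le> n"
  shows "mat_apply (Conf n lam) (swap_kernel k c) f a = swap_apply k c f a"
proof -
  have "mat_apply (Conf n lam) (swap_kernel k c) f a
      = (\<Sum>i\<le>size (a (Suc k)). shift_weight c (size (a (Suc k))) i *
           (\<Sum>d\<in>Conf n lam. if shift_config k i a = d then f d else 0))"
    unfolding mat_apply_def swap_kernel_def swap_apply_def sum_distrib_right sum_distrib_left
    by (subst sum.swap) (intro sum.cong refl, simp)
  also have "\<dots> = swap_apply k c f a"
    unfolding swap_apply_def
    using shift_config_in_Conf[OF a k] finite_Conf by (simp add: sum.delta)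
  finally show ?thesis .
qed

lemma sum_swap_kernel:
  assumes "a \<in> Conf n lam" "1 \<le> k" "Suc k \<le> n"
  shows "(\<Sum>d\<in>Conf n lam. swap_kernel k c a d) = 1"
  using mat_apply_swap_kernel[OF assms, of c "\<lambda>_. 1"]
  by (simp add: mat_apply_def swap_apply_def sum_shift_weight)

lemma swap_kernel_restr:
  assumes "swap_kernel k c a d \<noteq> 0" "l < k"
  shows "restr l d = restr l a"
proof -
  obtain i where "shift_config k i a = d"
    using assms(1) by (force simp: swap_kernel_def swap_apply_def intro: ccontr)
  then show ?thesis
    using assms(2) unfolding restr_def shift_config_def by (auto intro: map_cong)
qed

lemma shift_config_step:
  assumes "j \<noteq> k" "j \<noteq> Suc k" "nxt n j \<noteq> Suc k" "nxt n j \<noteq> j"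
  shows "shift_config k i (step n a j) = step n (shift_config k i a) j"
  using assms by (auto simp: fun_eq_iff shift_config_def step_eq)

lemma pair_jumps_eq_pair_gen:
  assumes "nxt n k = Suc k" "nxt n (Suc k) = q" "q \<noteq> k" "q \<noteq> Suc k"
  shows "jump_rate y b k * (f (step n b k) - f b) + jump_rate y b (Suc k) * (f (step n b (Suc k)) - f b)
       = pair_gen (1 / y k) (1 / y (Suc k)) (\<lambda>P R. f (b(k := P, Suc k := R)))
           (\<lambda>P R e. f (b(k := P, Suc k := R, q := add_mset e (b q)))) (b k) (b (Suc k))"
  using assms
  by (auto simp: pair_gen_def first_jump_def second_jump_def jump_rate_def step_eq fun_upd_twist fun_upd_idem)

lemma swap_apply_off_pair:
  assumes "j \<noteq> k" "j \<noteq> Suc k" "nxt n j \<noteq> Suc k" "nxt n j \<noteq> j"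
  shows "jump_rate x a j * (swap_apply k c f (step n a j) - swap_apply k c f a)
       = swap_apply k c (\<lambda>b. jump_rate x b j * (f (step n b j) - f b)) a"
proof -
  have "step n a j (Suc k) = a (Suc k)" and "shift_config k i a j = a j" for i
    using assms by (simp_all add: step_eq shift_config_def)
  then show ?thesis
    using shift_config_step[OF assms]
    by (simp add: swap_apply_def jump_rate_def sum_distrib_left sum_subtractf algebra_simps)
qed

lemma swap_apply_pair_jumps:
  assumes "nxt n k = Suc k" "nxt n (Suc k) = q" "q \<noteq> k" "q \<noteq> Suc k" and x: "x (Suc k) \<noteq> 0"
  defines "c \<equiv> x (Suc k) / x k" and "x' \<equiv> x \<circ> transpose k (Suc k)"
  shows "jump_rate x' a k * (swap_apply k c f (step n a k) - swap_apply k c f a)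
         + jump_rate x' a (Suc k) * (swap_apply k c f (step n a (Suc k)) - swap_apply k c f a)
       = swap_apply k c (\<lambda>b. jump_rate x b k * (f (step n b k) - f b)
                            + jump_rate x b (Suc k) * (f (step n b (Suc k)) - f b)) a"
proof -
  define G where "G = (\<lambda>P R. f (a(k := P, Suc k := R)))"
  define H where "H = (\<lambda>P R e. f (a(k := P, Suc k := R, q := add_mset e (a q))))"
  have upd: "a(k := P, Suc k := R, q := X) = a(q := X, k := P, Suc k := R)" for P R X
    using assms(3,4) by (auto simp: fun_eq_iff)
  have "jump_rate x' a k * (swap_apply k c f (step n a k) - swap_apply k c f a)
         + jump_rate x' a (Suc k) * (swap_apply k c f (step n a (Suc k)) - swap_apply k c f a)
      = pair_gen (1 / x (Suc k)) (1 / x k) (shift_avg G c) (\<lambda>P R e. shift_avg (\<lambda>A B. H A B e) c P R) (a k) (a (Suc k))"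
    unfolding pair_jumps_eq_pair_gen[OF assms(1-4)] upd swap_apply_fun_upd
    by (simp add: x'_def G_def H_def upd)
  also have "\<dots> = shift_avg (pair_gen (1 / x k) (1 / x (Suc k)) G H) c (a k) (a (Suc k))"
    using x by (intro pair_gen_shift_avg) (simp add: c_def)
  also have "\<dots> = swap_apply k c (\<lambda>b. jump_rate x b k * (f (step n b k) - f b)
                            + jump_rate x b (Suc k) * (f (step n b (Suc k)) - f b)) a"
    unfolding swap_apply_eq_shift_avg pair_jumps_eq_pair_gen[OF assms(1-4)]
    using assms(3,4) by (simp add: G_def H_def)
  finally show ?thesis .
qed

lemma swap_apply_sum:
  "swap_apply k c (\<lambda>b. \<Sum>j\<in>J. g j b) a = (\<Sum>j\<in>J. swap_apply k c (g j) a)"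
  unfolding swap_apply_def by (subst sum.swap) (simp add: sum_distrib_left)

lemma swap_apply_cong:
  assumes "a \<in> Conf n lam" "1 \<le> k" "Suc k \<le> n" "\<And>b. b \<in> Conf n lam \<Longrightarrow> g b = h b"
  shows "swap_apply k c g a = swap_apply k c h a"
  unfolding swap_apply_def using assms shift_config_in_Conf by (auto intro!: sum.cong)

lemma gen_apply_swap_apply:
  assumes n: "3 \<le> n" and k: "1 \<le> k" "Suc k \<le> n" and x: "x (Suc k) \<noteq> 0"
  defines "c \<equiv> x (Suc k) / x k"
  shows "gen_apply n (x \<circ> transpose k (Suc k)) (swap_apply k c f) a = swap_apply k c (gen_apply n x f) a"
proof -
  define q where "q = nxt n (Suc k)"
  have nk: "nxt n k = Suc k" and q: "q \<noteq> k" "q \<noteq> Suc k"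
    using n k by (auto simp: q_def nxt_def)
  have "gen_apply n (x \<circ> transpose k (Suc k)) (swap_apply k c f) a
      = (\<Sum>j\<in>{1..n}. swap_apply k c (\<lambda>b. jump_rate x b j * (f (step n b j) - f b)) a)"
    unfolding gen_apply_def
  proof (rule sum_cong_except_two[of _ k "Suc k"])
    fix j assume j: "j \<in> {1..n}" "j \<noteq> k" "j \<noteq> Suc k"
    have "jump_rate (x \<circ> transpose k (Suc k)) a j = jump_rate x a j"
      using j by (simp add: jump_rate_def)
    moreover have "nxt n j \<noteq> Suc k" "nxt n j \<noteq> j"
      using nxt_eq_Suc[of n j k] nxt_neq[of n j] j k n by auto
    ultimately show "jump_rate (x \<circ> transpose k (Suc k)) a j * (swap_apply k c f (step n a j) - swap_apply k c f a)
        = swap_apply k c (\<lambda>b. jump_rate x b j * (f (step n b j) - f b)) a"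
      using swap_apply_off_pair[OF j(2,3)] by simp
  next
    show "jump_rate (x \<circ> transpose k (Suc k)) a k * (swap_apply k c f (step n a k) - swap_apply k c f a)
        + jump_rate (x \<circ> transpose k (Suc k)) a (Suc k) * (swap_apply k c f (step n a (Suc k)) - swap_apply k c f a)
        = swap_apply k c (\<lambda>b. jump_rate x b k * (f (step n b k) - f b)) a
        + swap_apply k c (\<lambda>b. jump_rate x b (Suc k) * (f (step n b (Suc k)) - f b)) a"
      using swap_apply_pair_jumps[where x = x, OF nk q_def[symmetric] q x] swap_apply_sum[where J = "{k, Suc k}"]
      by (simp add: c_def)
  qed (use k in auto)
  also have "\<dots> = swap_apply k c (gen_apply n x f) a"
    unfolding gen_apply_def[abs_def] swap_apply_sum ..
  finally show ?thesis .
qed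

lemma intertwines_swap_kernel:
  assumes n: "3 \<le> n" and k: "1 \<le> k" "Suc k \<le> n" and x: "x (Suc k) \<noteq> 0"
  shows "intertwines (Conf n lam) (gen n lam (x \<circ> transpose k (Suc k))) (swap_kernel k (x (Suc k) / x k)) (gen n lam x)"
  unfolding intertwines_def
proof (intro allI ballI)
  fix f a assume a: "a \<in> Conf n lam"
  let ?S = "Conf n lam" and ?c = "x (Suc k) / x k"
  have n2: "2 \<le> n" using n by simp
  have "mat_apply ?S (gen n lam (x \<circ> transpose k (Suc k))) (mat_apply ?S (swap_kernel k ?c) f) a
      = gen_apply n (x \<circ> transpose k (Suc k)) (mat_apply ?S (swap_kernel k ?c) f) a"
    by (rule mat_apply_gen[OF a n2])
  also have "\<dots> = gen_apply n (x \<circ> transpose k (Suc k)) (swap_apply k ?c f) a"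
    by (rule gen_apply_cong[OF a n2]) (rule mat_apply_swap_kernel[OF _ k])
  also have "\<dots> = swap_apply k ?c (gen_apply n x f) a"
    by (rule gen_apply_swap_apply[where x = x, OF n k x])
  also have "\<dots> = swap_apply k ?c (mat_apply ?S (gen n lam x) f) a"
    by (rule swap_apply_cong[OF a k]) (rule mat_apply_gen[OF _ n2, symmetric])
  also have "\<dots> = mat_apply ?S (swap_kernel k ?c) (mat_apply ?S (gen n lam x) f) a"
    by (rule mat_apply_swap_kernel[OF a k, symmetric])
  finally show "mat_apply ?S (gen n lam (x \<circ> transpose k (Suc k))) (mat_apply ?S (swap_kernel k ?c) f) a
      = mat_apply ?S (swap_kernel k ?c) (mat_apply ?S (gen n lam x) f) a" .
qed

lemma fdd_transpose_adjacent:
  assumes n: "3 \<le> n" and k: "l < k" "Suc k \<le> n" and x: "x (Suc k) \<noteq> 0"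
    and a: "a \<in> Conf n lam" and empty: "a (Suc k) = {#}"
  shows "fdd (Conf n lam) (gen n lam (x \<circ> transpose k (Suc k))) l a s obs = fdd (Conf n lam) (gen n lam x) l a s obs"
proof -
  have k1: "1 \<le> k" using k by simp
  have "fdd (Conf n lam) (gen n lam (x \<circ> transpose k (Suc k))) l a s obs
      = mat_apply (Conf n lam) (swap_kernel k (x (Suc k) / x k)) (\<lambda>d. fdd (Conf n lam) (gen n lam x) l d s obs) a"
  proof (rule fdd_intertwining[OF finite_Conf intertwines_swap_kernel[where x = x, OF n k1 k(2) x] _ _ a])
    show "restr l e = restr l d" if "swap_kernel k (x (Suc k) / x k) d e \<noteq> 0" for d e
      using swap_kernel_restr[OF that k(1)] .
    show "(\<Sum>e\<in>Conf n lam. swap_kernel k (x (Suc k) / x k) d e) = 1" if "d \<in> Conf n lam" for d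
      using sum_swap_kernel[OF that k1 k(2)] .
  qed
  then show ?thesis
    by (simp add: mat_apply_swap_kernel[OF a k1 k(2)] swap_apply_empty[where a = a, OF empty])
qed

section \<open>Permutations of the parameters\<close>

lemma transpose_invariant_by_adjacent_transpositions:
  fixes F :: "(nat \<Rightarrow> 'c) \<Rightarrow> 'd"
  assumes Y: "\<And>y i j. y \<in> Y \<Longrightarrow> i \<in> {a..b} \<Longrightarrow> j \<in> {a..b} \<Longrightarrow> y \<circ> transpose i j \<in> Y"
    and adj: "\<And>y j. y \<in> Y \<Longrightarrow> a \<le> j \<Longrightarrow> Suc j \<le> b \<Longrightarrow> F (y \<circ> transpose j (Suc j)) = F y"
  shows "y \<in> Y \<Longrightarrow> a \<le> i \<Longrightarrow> i < j \<Longrightarrow> j \<le> b \<Longrightarrow> F (y \<circ> transpose i j) = F y"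
proof (induction "j - i" arbitrary: j y)
  case (Suc d)
  show ?case
  proof (cases "j = Suc i")
    case True
    then show ?thesis using Suc.prems adj by simp
  next
    case False
    define t where "t = transpose (j - 1) j"
    have ij: "i < j - 1" using False Suc.prems by auto
    have "transpose i j = t \<circ> transpose i (j - 1) \<circ> t"
      using ij transpose_comp_triple[of j i "j - 1"] by (simp add: t_def transpose_commute)
    then have "F (y \<circ> transpose i j) = F (y \<circ> t \<circ> transpose i (j - 1) \<circ> t)"
      by (simp add: comp_assoc)
    also have "\<dots> = F (y \<circ> t)"
      using Suc ij Y[of _ i "j - 1"] Y[of y "j - 1" j] adj[of "y \<circ> t \<circ> transpose i (j - 1)" "j - 1"]
      by (simp add: t_def)
    also have "\<dots> = F y"
      using Suc ij adj[of y "j - 1"] by (simp add: t_def)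
    finally show ?thesis .
  qed
qed simp

lemma permutes_invariant_by_adjacent_transpositions:
  fixes F :: "(nat \<Rightarrow> 'c) \<Rightarrow> 'd"
  assumes \<sigma>: "\<sigma> permutes {a..b}"
    and Y: "\<And>y i j. y \<in> Y \<Longrightarrow> i \<in> {a..b} \<Longrightarrow> j \<in> {a..b} \<Longrightarrow> y \<circ> transpose i j \<in> Y"
    and adj: "\<And>y j. y \<in> Y \<Longrightarrow> a \<le> j \<Longrightarrow> Suc j \<le> b \<Longrightarrow> F (y \<circ> transpose j (Suc j)) = F y"
    and y: "y \<in> Y"
  shows "F (y \<circ> \<sigma>) = F y"
proof -
  have transp: "F (y \<circ> transpose i j) = F y" if "y \<in> Y" "a \<le> i" "i < j" "j \<le> b" for y i j
    using transpose_invariant_by_adjacent_transpositions[where F = F, OF Y adj] that by blast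
  have "\<forall>y\<in>Y. F (y \<circ> \<sigma>) = F y"
    using \<sigma> finite_atLeastAtMost
  proof (induction rule: permutes_induct)
    case (swap i j p)
    show ?case
    proof
      fix y assume "y \<in> Y"
      then have "y \<circ> transpose i j \<in> Y" using swap.hyps Y by simp
      then have "F (y \<circ> transpose i j \<circ> p) = F (y \<circ> transpose i j)"
        using swap.IH by blast
      then have "F (y \<circ> (transpose i j \<circ> p)) = F (y \<circ> transpose i j)"
        by (simp add: comp_assoc)
      also have "\<dots> = F y"
        using swap transp[OF \<open>y \<in> Y\<close>, of i j] transp[OF \<open>y \<in> Y\<close>, of j i]
        by (cases "i < j") (auto simp: transpose_commute)
      finally show "F (y \<circ> (transpose i j \<circ> p)) = F y" .
    qed
  qed simp
  then show ?thesis using y by blast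
qed

text \<open>Only \<open>x j \<noteq> 0\<close> for \<open>j \<in> {l+1..n}\<close> is used.\<close>

theorem theorem7:
  fixes n l :: nat and lam :: "nat multiset" and x :: "nat \<Rightarrow> real"
    and \<sigma> :: "nat \<Rightarrow> nat" and eta0 :: "nat \<Rightarrow> nat multiset"
    and obs :: "(real \<times> nat multiset list) list"
  assumes "n \<ge> 3" and "1 < l" and "l < n"
    and "\<forall>p\<in>#lam. p > 0"
    and "\<forall>j\<in>{1..n}. x j > 0"
    and "\<sigma> permutes {l+1..n}"
    and "eta0 \<in> Conf n lam"
    and "\<forall>j\<in>{l+1..n}. eta0 j = {#}"
    and "sorted_wrt (<) (map fst obs)"
    and "\<forall>p\<in>set obs. fst p > 0"
  shows "fdd (Conf n lam) (gen n lam x) l eta0 0 obs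
       = fdd (Conf n lam) (gen n lam (x \<circ> \<sigma>)) l eta0 0 obs"
proof -
  let ?F = "\<lambda>y. fdd (Conf n lam) (gen n lam y) l eta0 0 obs"
  let ?Y = "{y :: nat \<Rightarrow> real. \<forall>j\<in>{l+1..n}. y j \<noteq> 0}"
  have "?F (x \<circ> \<sigma>) = ?F x"
  proof (rule permutes_invariant_by_adjacent_transpositions[OF assms(6), where Y = ?Y])
    show "y \<circ> transpose i j \<in> ?Y" if "y \<in> ?Y" "i \<in> {l+1..n}" "j \<in> {l+1..n}" for y i j
      using that by (auto simp: transpose_def)
    show "?F (y \<circ> transpose j (Suc j)) = ?F y" if "y \<in> ?Y" "l + 1 \<le> j" "Suc j \<le> n" for y j
      using that assms(8) by (intro fdd_transpose_adjacent[OF assms(1) _ _ _ assms(7)]) auto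
    have "x j \<noteq> 0" if "j \<in> {l+1..n}" for j
      using assms(5) that by (metis atLeastAtMost_iff le_add2 le_trans less_irrefl)
    then show "x \<in> ?Y" by blast
  qed
  then show ?thesis by simp
qed

end
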